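(* There is a constant $C>0$ such that $|L_{nl}|\le C\sqrt{n+1}$ for all integers $0\le l\le n$.
   Context: With $\Lambda(z)=\frac{\Gamma(z+1/2)}{\Gamma(z+1)}$, the coefficients $L_{nl}$ ($0\le l\le n$) are defined by: $L_{nl}=1$ if $n=l=0$; $L_{nl}=\frac{\sqrt\pi}{2\Lambda(n)}$ if $n=l>0$; $L_{nl}=\frac{-n(l+1/2)}{(n+l+1)(n-l)}\Lambda\!\left(\frac{n-l-2}{2}\right)\Lambda\!\left(\frac{n+l-1}{2}\right)$ if $n>l$ and $n+l$ is even; $L_{nl}=0$ otherwise. *)

theory Defs
  imports "HOL-Analysis.Analysis"
begin

definition Lam :: "real \<Rightarrow> real" where
  "Lam z = Gamma (z + 1/2) / Gamma (z + 1)"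

definition Lcoef :: "nat \<Rightarrow> nat \<Rightarrow> real" where
  "Lcoef n l =
    (if n = 0 \<and> l = 0 then 1
     else if n = l \<and> n > 0 then sqrt pi / (2 * Lam (real n))
     else if n > l \<and> even (n + l) then
       (- real n * (real l + 1/2)) / ((real n + real l + 1) * (real n - real l))
         * Lam ((real n - real l - 2) / 2) * Lam ((real n + real l - 1) / 2)
     else 0)"

end

theory Submission
  imports Defs
begin

text \<open>
  The quotient \<open>\<Lambda>(x) = \<Gamma>(x+1/2)/\<Gamma>(x+1)\<close> behaves like \<open>1/\<surd>x\<close>. Elementarily:
  the recurrence \<open>\<Lambda>(x+1) = \<Lambda>(x)(x+1/2)/(x+1)\<close> makes \<open>\<Lambda>(x)\<^sup>2(x+1/2)\<close> decrease and
  \<open>\<Lambda>(x)\<^sup>2 x\<close> increase along \<open>x, x+1, x+2, \<dots>\<close>, so the values at \<open>0, 1/2, 1\<close> give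
  \<open>\<Lambda>(k/2)\<^sup>2 \<le> 4/(k+1)\<close> and \<open>\<Lambda>(n)\<^sup>2 \<ge> \<pi>/(4n)\<close>. On the diagonal this bounds \<open>L\<^sub>n\<^sub>n\<^sup>2\<close> by \<open>n\<close>;
  off the diagonal, with \<open>d = n - l \<ge> 2\<close>, the squared \<open>\<Lambda>\<close> factors contribute at most
  \<open>16/((d-1)(n+l))\<close> and the squared rational prefactor at most \<open>(n/d)\<^sup>2\<close>, so again \<open>L\<^sub>n\<^sub>l\<^sup>2 \<le> 4n\<close>.
\<close>

lemma Lam_pos: "x > -1/2 \<Longrightarrow> Lam x > 0"
  unfolding Lam_def by (intro divide_pos_pos Gamma_real_pos) auto

lemma Lam_plus1:
  assumes "x > -1/2"
  shows "Lam (x + 1) = Lam x * (x + 1/2) / (x + 1)"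
proof -
  have "Gamma (x + 1/2 + 1) = (x + 1/2) * Gamma (x + 1/2)"
    using assms by (intro Gamma_plus1) (auto elim!: nonpos_Ints_cases')
  moreover have "Gamma (x + 1 + 1) = (x + 1) * Gamma (x + 1)"
    using assms by (intro Gamma_plus1) (auto elim!: nonpos_Ints_cases')
  moreover have "x + 1 + 1/2 = x + 1/2 + 1"
    by simp
  ultimately show ?thesis
    unfolding Lam_def by (simp add: ac_simps)
qed

lemma Lam_plus1_sq:
  assumes "x > -1/2"
  shows "(Lam (x + 1))\<^sup>2 = (Lam x)\<^sup>2 * (x + 1/2)\<^sup>2 / (x + 1)\<^sup>2"
  using assms by (simp add: Lam_plus1 power_divide power_mult_distrib)

lemma Lam_0: "Lam 0 = sqrt pi"
  unfolding Lam_def by (simp add: Gamma_one_half_real)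

lemma Lam_1: "Lam 1 = sqrt pi / 2"
  using Lam_plus1[of 0] by (simp add: Lam_0)

lemma Lam_half: "Lam (1/2) = 2 / sqrt pi"
proof -
  have "Gamma (1/2 + 1 :: real) = 1/2 * Gamma (1/2)"
    by (rule Gamma_plus1) (auto elim!: nonpos_Ints_cases')
  then have Gamma_3_2: "Gamma (3/2 :: real) = sqrt pi / 2"
    by (simp add: Gamma_one_half_real)
  have "Lam (1/2) = Gamma 1 / Gamma (3/2)"
    unfolding Lam_def by simp
  also have "\<dots> = 2 / sqrt pi"
    by (simp add: Gamma_3_2)
  finally show ?thesis .
qed

lemma Lam_sq_mult_plus_half_decreasing:
  assumes "x > -1/2"
  shows "(Lam (x + 1))\<^sup>2 * (x + 1 + 1/2) \<le> (Lam x)\<^sup>2 * (x + 1/2)"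
proof -
  have "(Lam (x + 1))\<^sup>2 * (x + 1 + 1/2) = (Lam x)\<^sup>2 * ((x + 1/2)\<^sup>2 * (x + 3/2) / (x + 1)\<^sup>2)"
    unfolding Lam_plus1_sq[OF assms] by simp
  also have "\<dots> \<le> (Lam x)\<^sup>2 * (x + 1/2)"
  proof (intro mult_left_mono)
    have "(x + 1)\<^sup>2 > 0"
      using assms by simp
    then show "(x + 1/2)\<^sup>2 * (x + 3/2) / (x + 1)\<^sup>2 \<le> x + 1/2"
      using assms by (simp add: pos_divide_le_eq algebra_simps power2_eq_square)
  qed simp
  finally show ?thesis .
qed

lemma Lam_sq_mult_increasing:
  assumes "x > -1/2"
  shows "(Lam x)\<^sup>2 * x \<le> (Lam (x + 1))\<^sup>2 * (x + 1)"
proof -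
  have "(Lam x)\<^sup>2 * x \<le> (Lam x)\<^sup>2 * ((x + 1/2)\<^sup>2 / (x + 1))"
    using assms by (intro mult_left_mono) (simp_all add: le_divide_eq algebra_simps power2_eq_square)
  also have "\<dots> = (Lam (x + 1))\<^sup>2 * (x + 1)"
    unfolding Lam_plus1_sq[OF assms] using assms by (simp add: power2_eq_square)
  finally show ?thesis .
qed

lemma Lam_sq_mult_plus_half_shift_le:
  assumes "x > -1/2"
  shows "(Lam (x + real m))\<^sup>2 * (x + real m + 1/2) \<le> (Lam x)\<^sup>2 * (x + 1/2)"
proof (induction m)
  case (Suc m)
  have "(Lam (x + real m + 1))\<^sup>2 * (x + real m + 1 + 1/2) \<le> (Lam (x + real m))\<^sup>2 * (x + real m + 1/2)"
    using assms by (intro Lam_sq_mult_plus_half_decreasing) simp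
  with Suc show ?case
    by (simp add: ac_simps)
qed simp

lemma Lam_sq_mult_shift_ge:
  assumes "x > -1/2"
  shows "(Lam x)\<^sup>2 * x \<le> (Lam (x + real m))\<^sup>2 * (x + real m)"
proof (induction m)
  case (Suc m)
  have "(Lam (x + real m))\<^sup>2 * (x + real m) \<le> (Lam (x + real m + 1))\<^sup>2 * (x + real m + 1)"
    using assms by (intro Lam_sq_mult_increasing) simp
  with Suc show ?case
    by (simp add: ac_simps)
qed simp

lemma Lam_half_integer_sq_bound: "(Lam (real k / 2))\<^sup>2 * (real k + 1) \<le> 4"
proof (cases "even k")
  case True
  then obtain m where "k = 2 * m" by blast
  then have k: "real k / 2 = 0 + real m" "real k + 1 = 2 * (0 + real m + 1/2)"
    by simp_all
  have "(Lam (real k / 2))\<^sup>2 * (real k + 1) = 2 * ((Lam (0 + real m))\<^sup>2 * (0 + real m + 1/2))"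
    unfolding k by simp
  also have "\<dots> \<le> 2 * (pi / 2)"
    using Lam_sq_mult_plus_half_shift_le[of 0 m] by (simp add: Lam_0)
  also have "\<dots> \<le> 4"
    using pi_less_4 by simp
  finally show ?thesis .
next
  case False
  then obtain m where "k = 2 * m + 1" using oddE by blast
  then have k: "real k / 2 = 1/2 + real m" "real k + 1 = 2 * (1/2 + real m + 1/2)"
    by simp_all
  have "(Lam (real k / 2))\<^sup>2 * (real k + 1) = 2 * ((Lam (1/2 + real m))\<^sup>2 * (1/2 + real m + 1/2))"
    unfolding k by simp
  also have "\<dots> \<le> 2 * (4 / pi)"
    using Lam_sq_mult_plus_half_shift_le[of "1/2" m] by (simp add: Lam_half power_divide)
  also have "\<dots> \<le> 4"
    using pi_gt3 by (simp add: field_simps)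
  finally show ?thesis .
qed

lemma Lam_integer_sq_lower_bound:
  assumes "n \<ge> 1"
  shows "pi / 4 \<le> (Lam (real n))\<^sup>2 * real n"
proof -
  obtain m where "n = 1 + m"
    using assms le_Suc_ex by blast
  then show ?thesis
    using Lam_sq_mult_shift_ge[of 1 m] by (simp add: Lam_1 power_divide)
qed

lemma Lcoef_diagonal_sq_le:
  assumes "n \<ge> 1"
  shows "(Lcoef n n)\<^sup>2 \<le> real n"
proof -
  have "(Lcoef n n)\<^sup>2 = pi / (4 * (Lam (real n))\<^sup>2)"
    using assms by (simp add: Lcoef_def power_divide power_mult_distrib)
  also have "\<dots> \<le> real n"
    using Lam_integer_sq_lower_bound[OF assms] Lam_pos[of "real n"]
    by (simp add: divide_le_eq mult.commute)
  finally show ?thesis .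
qed

lemma Lcoef_off_diagonal_sq_le:
  assumes "l < n" and "even (n + l)"
  shows "(Lcoef n l)\<^sup>2 \<le> 4 * real n"
proof -
  define d where "d = real n - real l"
  define c where "c = real n * (real l + 1/2) / ((real n + real l + 1) * d)"
  define A where "A = Lam ((real n - real l - 2) / 2)"
  define B where "B = Lam ((real n + real l - 1) / 2)"
  have "n - l \<ge> 2"
    using assms by presburger
  then have d: "d \<ge> 2" "real n \<ge> 2"
    unfolding d_def by linarith+
  have L: "Lcoef n l = - c * A * B"
    using assms unfolding Lcoef_def c_def A_def B_def d_def by simp
  have "c * d = real n * ((real l + 1/2) / (real n + real l + 1))"
    using d unfolding c_def by simp
  also have "\<dots> \<le> real n"
    by (intro mult_left_le) auto
  finally have "c * d \<le> real n" .
  moreover have "c \<ge> 0"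
    using d unfolding c_def by simp
  ultimately have c: "(c * d)\<^sup>2 \<le> (real n)\<^sup>2"
    using d by (intro power_mono) auto
  have A: "A\<^sup>2 * (d - 1) \<le> 4"
    using Lam_half_integer_sq_bound[of "n - l - 2"] \<open>n - l \<ge> 2\<close>
    unfolding A_def d_def by (simp add: of_nat_diff algebra_simps)
  have B: "B\<^sup>2 * (real n + real l) \<le> 4"
    using Lam_half_integer_sq_bound[of "n + l - 1"] d
    unfolding B_def by (simp add: of_nat_diff algebra_simps)
  have "(2::real)\<^sup>2 \<le> d\<^sup>2"
    using d by (intro power_mono) auto
  then have "4 * 1 * real n \<le> d\<^sup>2 * (d - 1) * (real n + real l)"
    using d by (intro mult_mono) auto
  then have "(Lcoef n l)\<^sup>2 * (4 * real n) \<le> (Lcoef n l)\<^sup>2 * (d\<^sup>2 * (d - 1) * (real n + real l))"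
    by (intro mult_left_mono) auto
  also have "\<dots> = (c * d)\<^sup>2 * (A\<^sup>2 * (d - 1)) * (B\<^sup>2 * (real n + real l))"
    unfolding L by (simp add: power_mult_distrib algebra_simps)
  also have "\<dots> \<le> (real n)\<^sup>2 * 4 * 4"
    using c A B d by (intro mult_mono) auto
  finally show ?thesis
    using d by (simp add: power2_eq_square)
qed

lemma Lcoef_sq_le:
  assumes "l \<le> n"
  shows "(Lcoef n l)\<^sup>2 \<le> 4 * (real n + 1)"
proof -
  consider "n = 0" | "l = n" "n \<ge> 1" | "l < n" "even (n + l)" | "l < n" "odd (n + l)"
    using assms by linarith
  then show ?thesis
  proof cases
    case 2
    then show ?thesis using Lcoef_diagonal_sq_le by fastforce
  next
    case 3
    then show ?thesis using Lcoef_off_diagonal_sq_le[of l n] by simp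
  qed (use assms in \<open>auto simp: Lcoef_def\<close>)
qed

theorem mainTheorem5:
  shows "\<exists>C::real. C > 0 \<and> (\<forall>n l::nat. l \<le> n \<longrightarrow> \<bar>Lcoef n l\<bar> \<le> C * sqrt (real n + 1))"
proof (intro exI[of _ 2] conjI allI impI)
  fix n l :: nat
  assume "l \<le> n"
  then have "sqrt ((Lcoef n l)\<^sup>2) \<le> sqrt (4 * (real n + 1))"
    by (intro real_sqrt_le_mono Lcoef_sq_le)
  also have "\<dots> = 2 * sqrt (real n + 1)"
    by (simp only: real_sqrt_mult) simp
  finally show "\<bar>Lcoef n l\<bar> \<le> 2 * sqrt (real n + 1)"
    by simp
qed simp

end
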